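(* Consider the following $n$-round game with a finite action set $\mathcal{A}$ of size $K$. In each round $t=1,\dots,n$: (1) an adversary picks a reward function $r_t:\mathcal{A}\to[0,1]$, possibly depending on all past actions of the learner and of the behavior policy; (2) the learner selects an action $A_t\in\mathcal{A}$; (3) an action $A^B_t\in\mathcal{A}$ is drawn from a fixed behavior policy $\pi_B\in\Delta_{\mathcal{A}}$, unknown to the learner; (4) the learner gains $r_t(A_t)$ (which it does not observe) and observes $A^B_t$ and $R^B_t=r_t(A^B_t)$. The learner runs the following algorithm with learning rate $\eta=\sqrt{\log(K)/n}$, $\gamma_1=1+\frac{\eta}{2}$ and $\gamma_t=\frac{\eta}{2}+\sqrt{\log(K(t-1)^2)/(2t-2)}$ for $t\ge2$: it maintains the empirical estimates $\hat\pi_1(a)=0$ and $\hat\pi_t(a)=\frac{1}{t-1}\sum_{k=1}^{t-1}\mathbb{1}\{A^B_k=a\}$ for $t\ge 2$; in round $t$ it plays $A_t\sim\pi_t$, where $$\pi_t(a)=\frac{w_t(a)}{\sum_{a'}w_t(a')},\qquad w_t(a)=\exp\Big(\eta\sum_{k=1}^{t-1}\tilde r_k(a)\Big),$$ and after observing $A^B_t,R^B_t$ it forms $\tilde r_t(a)=\dfrac{R^B_t\,\mathbb{1}\{A^B_t=a\}}{\hat\pi_t(a)+\gamma_t}$ for all $a$. Then for any comparator policy $\pi^*\in\Delta_{\mathcal{A}}$, the regret $\mathcal{R}(\pi^* )=\sum_{t=1}^n\sum_a(\pi^*(a)-\pi_t(a))r_t(a)$ satisfies $$\mathbb{E}[\mathcal{R}(\pi^*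 )]=\mathcal{O}\Big(C(\pi^*;\pi_B)\sqrt{n\log(Kn)}\Big),$$ where $C(\pi^*;\pi_B)=\sum_a\pi^*(a)/\pi_B(a)$.
   Context: $\Delta_{\mathcal{A}}$ is the set of probability distributions on $\mathcal{A}$. $\mathcal{F}_t=\sigma(r_t,A^B_t,A_t,\dots,r_1,A^B_1,A_1)$ is the history up to round $t$, and $\pi_t(a)=\mathbb{P}(A_t=a\mid\mathcal{F}_{t-1})$. The expectation is over all randomness in actions and adaptively chosen rewards. The $\mathcal{O}(\cdot)$ hides absolute constants. *)

theory Defs
  imports "HOL-Probability.Probability"
begin

text \<open>Actions are the natural numbers 0..K-1. A history of length t is a list of
  pairs (A_k, A^B_k) for rounds k = 1..t in chronological order (element k-1 is round k).\<close>

type_synonym hist = "(nat \<times> nat) list"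

definition eta :: "nat \<Rightarrow> nat \<Rightarrow> real" where
  "eta K n = sqrt (ln (real K) / real n)"

definition gam :: "nat \<Rightarrow> nat \<Rightarrow> nat \<Rightarrow> real" where
  "gam K n t = (if t = 1 then 1 + eta K n / 2
     else eta K n / 2 + sqrt (ln (real K * (real t - 1)^2) / (2 * real t - 2)))"

definition pihat :: "hist \<Rightarrow> nat \<Rightarrow> real" where
  "pihat h a = (if h = [] then 0
     else real (length (filter (\<lambda>p. snd p = a) h)) / real (length h))"

text \<open>Importance-weighted reward estimate of round k (k \<ge> 1), computed from history h
  containing at least k rounds; the adversary maps the history of past rounds to the reward function.\<close>
definition rtilde :: "nat \<Rightarrow> nat \<Rightarrow> (hist \<Rightarrow> nat \<Rightarrow> real) \<Rightarrow> hist \<Rightarrow> nat \<Rightarrow> nat \<Rightarrow> real" where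
  "rtilde K n adv h k a =
     (let AB = snd (h ! (k - 1)); RB = adv (take (k - 1) h) AB in
      RB * (if AB = a then 1 else 0) / (pihat (take (k - 1) h) a + gam K n k))"

definition weight :: "nat \<Rightarrow> nat \<Rightarrow> (hist \<Rightarrow> nat \<Rightarrow> real) \<Rightarrow> hist \<Rightarrow> nat \<Rightarrow> real" where
  "weight K n adv h a = exp (eta K n * (\<Sum>k = 1..length h. rtilde K n adv h k a))"

text \<open>Learner's policy pi_t in round t = length h + 1.\<close>
definition pol :: "nat \<Rightarrow> nat \<Rightarrow> (hist \<Rightarrow> nat \<Rightarrow> real) \<Rightarrow> hist \<Rightarrow> nat \<Rightarrow> real" where
  "pol K n adv h a = (if a < K then weight K n adv h a / (\<Sum>a'<K. weight K n adv h a') else 0)"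

primrec game :: "nat \<Rightarrow> nat \<Rightarrow> (hist \<Rightarrow> nat \<Rightarrow> real) \<Rightarrow> nat pmf \<Rightarrow> nat \<Rightarrow> hist pmf" where
  "game K n adv piB 0 = return_pmf []"
| "game K n adv piB (Suc t) =
     game K n adv piB t \<bind> (\<lambda>h.
       embed_pmf (pol K n adv h) \<bind> (\<lambda>A.
       piB \<bind> (\<lambda>B. return_pmf (h @ [(A, B)]))))"

definition regret :: "nat \<Rightarrow> nat \<Rightarrow> (hist \<Rightarrow> nat \<Rightarrow> real) \<Rightarrow> nat pmf \<Rightarrow> hist \<Rightarrow> real" where
  "regret K n adv pistar h =
     (\<Sum>t = 1..n. \<Sum>a<K. (pmf pistar a - pol K n adv (take (t - 1) h) a) * adv (take (t - 1) h) a)"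

definition expected_regret :: "nat \<Rightarrow> nat \<Rightarrow> (hist \<Rightarrow> nat \<Rightarrow> real) \<Rightarrow> nat pmf \<Rightarrow> nat pmf \<Rightarrow> real" where
  "expected_regret K n adv piB pistar =
     measure_pmf.expectation (game K n adv piB n) (regret K n adv pistar)"

definition conc :: "nat \<Rightarrow> nat pmf \<Rightarrow> nat pmf \<Rightarrow> real" where
  "conc K pistar piB = (\<Sum>a<K. pmf pistar a / pmf piB a)"

end

theory Submission
  imports Defs
begin

(*
  The learner runs exponential weights on the importance-weighted estimates rtilde, so the
  potential argument bounds the regret of every history by ln K / eta plus, for each round t, a
  comparator error sum_a pistar(a) (r_t(a) - rtilde_t(a)) and a learner error
  sum_a pi_t(a) ((exp (eta rtilde_t(a)) - 1) / eta - r_t(a)).  Averaged over the behaviour action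
  of round t, the comparator error is sum_a pistar(a) r_t(a) (1 - piB(a) / (pihat_t(a) + gam_t)),
  which is at most C(pistar; piB) (gam_t + conf_width t) unless pihat_t overestimates piB by
  conf_width t; the learner error is nonpositive unless pihat_t underestimates piB by conf_width t,
  because the eta/2 in gam_t absorbs the curvature of exp.  By Hoeffding's inequality both bad
  events have probability at most 1/(K (t-1)^2), and on them the errors are still bounded by
  C(pistar; piB) and (e^2 - 1) / eta.  Finally sum_t gam_t and sum_t conf_width t are
  O(sqrt (n log (K n))) and sum_t 1/t^2 <= 2.
*)

section \<open>Real inequalities and sums\<close>

lemma one_minus_half_mult_exp_minus_one_le:
  fixes y :: real
  assumes "0 \<le> y"
  shows "(1 - y / 2) * (exp y - 1) \<le> y"
proof -
  define f where "f x = x - (1 - x / 2) * (exp x - 1)" for x :: real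
  have deriv: "(f has_real_derivative (1 - exp x + x * exp x) / 2) (at x)" for x
    unfolding f_def by (auto intro!: derivative_eq_intros simp: field_simps)
  have "exp x * (1 - x) \<le> 1" for x :: real
    using mult_left_mono[OF exp_ge_add_one_self[of "-x"], of "exp x"] by (simp add: exp_minus field_simps)
  then have "0 \<le> (1 - exp x + x * exp x) / 2" for x :: real
    by (simp add: algebra_simps)
  then have "f 0 \<le> f y"
    using DERIV_nonneg_imp_nondecreasing[OF assms] deriv by blast
  then show ?thesis by (simp add: f_def)
qed

text \<open>This is where the \<open>\<eta>/2\<close> in \<open>\<gamma>\<^sub>t\<close> pays for the second-order term of \<open>exp\<close>.\<close>

lemma exp_importance_estimate_le:
  fixes p r D e :: real
  assumes e: "0 < e" and pD: "p + e / 2 \<le> D" and p: "0 \<le> p" and r: "0 \<le> r" "r \<le> 1"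
  shows "p * (exp (e * r / D) - 1) / e \<le> r"
proof -
  have D: "0 < D" using e pD p by linarith
  define y where "y = e / D * r"
  have y0: "0 \<le> y" using e D r by (simp add: y_def)
  have ye: "y \<le> e / D" unfolding y_def by (rule mult_left_le) (use e D r in auto)
  have ey: "0 \<le> exp y - 1" using y0 by simp
  have "D * (1 - e / D / 2) = D - e / 2" using D by (simp add: field_simps)
  then have "p \<le> D * (1 - e / D / 2)" using pD by linarith
  then have "p * (exp y - 1) \<le> D * (1 - e / D / 2) * (exp y - 1)"
    using ey by (rule mult_right_mono)
  also have "\<dots> \<le> D * (1 - y / 2) * (exp y - 1)"
    using ye D ey by (intro mult_right_mono mult_left_mono) auto
  also have "\<dots> \<le> D * y"
    using one_minus_half_mult_exp_minus_one_le[OF y0] D by (simp add: mult.assoc)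
  also have "\<dots> = e * r" using D by (simp add: y_def)
  finally show ?thesis using e by (simp add: y_def field_simps)
qed

lemma exp_importance_estimate_le_exp2:
  fixes p r D e :: real
  assumes e: "0 < e" and D: "e / 2 \<le> D" and p: "0 \<le> p" "p \<le> 1" and r: "0 \<le> r" "r \<le> 1"
  shows "p * (exp (e * r / D) - 1) / e - r \<le> (exp 2 - 1) / e"
proof -
  have D0: "0 < D" using e D by linarith
  have "e * r / D \<le> e / D" using r e D0 by (simp add: divide_right_mono)
  also have "\<dots> \<le> 2" using D D0 e by (simp add: field_simps)
  finally have "exp (e * r / D) - 1 \<le> exp 2 - 1" by simp
  moreover have "0 \<le> exp (e * r / D) - 1" using e r D0 by simp
  ultimately have "p * (exp (e * r / D) - 1) \<le> exp 2 - 1"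
    using p by (metis mult_left_le_one_le order_trans)
  then show ?thesis using e r by (smt (verit) divide_right_mono)
qed

lemma importance_bias_le:
  fixes r p q g s :: real
  assumes r: "0 \<le> r" "r \<le> 1" and p: "0 < p" "p \<le> 1" and q: "0 \<le> q" and g: "0 < g" and s: "0 \<le> s"
  shows "r * (1 - p / (q + g)) \<le> (g + s + (if p + s \<le> q then 1 else 0)) / p"
proof -
  have D: "0 < q + g" using q g by simp
  consider "p + s \<le> q" | "q + g \<le> p" | "q < p + s" "p < q + g" by linarith
  then show ?thesis
  proof cases
    case 1
    have "r * (1 - p / (q + g)) \<le> 1"
      using r p D by (smt (verit) divide_nonneg_pos mult_left_le mult_nonneg_nonpos)
    also have "\<dots> \<le> (g + s + 1) / p" using p g s by (simp add: le_divide_eq)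
    finally show ?thesis using 1 by simp
  next
    case 2
    then have "r * (1 - p / (q + g)) \<le> 0"
      using r D by (intro mult_nonneg_nonpos) (auto simp: field_simps)
    also have "0 \<le> (g + s + (if p + s \<le> q then 1 else 0)) / p" using g s p by simp
    finally show ?thesis .
  next
    case 3
    have "r * (1 - p / (q + g)) \<le> 1 - p / (q + g)"
      using r 3 D by (intro mult_left_le_one_le) (auto simp: field_simps)
    also have "\<dots> = (q + g - p) / (q + g)" using D by (simp add: field_simps)
    also have "\<dots> \<le> (q + g - p) / p" using 3 p by (intro divide_left_mono) auto
    also have "\<dots> \<le> (g + s) / p" using 3 p by (intro divide_right_mono) auto
    finally show ?thesis using 3 by simp
  qed
qed

lemma sum_inverse_sqrt_le: "(\<Sum>m=1..N. 1 / sqrt (real m)) \<le> 2 * sqrt (real N)"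
proof (induction N)
  case (Suc N)
  define a b where "a = sqrt (real N)" and "b = sqrt (real (Suc N))"
  have b0: "0 < b" and b2: "b\<^sup>2 = a\<^sup>2 + 1" by (simp_all add: a_def b_def)
  have "(a * b)\<^sup>2 \<le> (b\<^sup>2 - 1 / 2)\<^sup>2" using b2 by (simp add: power_mult_distrib algebra_simps power2_eq_square)
  moreover have "0 \<le> b\<^sup>2 - 1 / 2" using b2 zero_le_power2[of a] by linarith
  ultimately have "a * b \<le> b\<^sup>2 - 1 / 2" by (rule power2_le_imp_le)
  then have "2 * a + 1 / b \<le> 2 * b" using b0 by (simp add: field_simps power2_eq_square)
  then show ?case using Suc by (simp add: a_def b_def)
qed simp

lemma sum_inverse_square_le: "(\<Sum>m=1..N. 1 / (real m)\<^sup>2) \<le> 2"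
proof -
  have "(\<Sum>m=1..N. 1 / (real m)\<^sup>2) \<le> 2 - 1 / real N" if "1 \<le> N"
    using that
  proof (induction N rule: nat_induct_at_least)
    case (Suc N)
    have "1 / (real (Suc N))\<^sup>2 \<le> 1 / (real N * real (Suc N))"
      using Suc by (intro divide_left_mono) (auto simp: power2_eq_square)
    also have "\<dots> = 1 / real N - 1 / real (Suc N)"
      using Suc by (simp add: field_simps)
    finally show ?case using Suc by simp
  qed simp
  then show ?thesis by (cases N) (auto intro: order_trans)
qed

lemma sum_atLeast1_atMost_split:
  fixes f :: "nat \<Rightarrow> 'a :: comm_monoid_add"
  assumes "1 \<le> n"
  shows "(\<Sum>t=1..n. f t) = f 1 + (\<Sum>m=1..<n. f (Suc m))"
  using assms by (simp add: sum.atLeast1_atMost_eq atLeast0LessThan[symmetric] sum.atLeast_Suc_lessThan)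

lemma sum_inverse_sqrt_square_terms_le:
  fixes e l :: real
  assumes "0 \<le> e" "0 \<le> l"
  shows "(\<Sum>m=1..<N. e + 2 * l / sqrt (real m) + 1 / (real m)\<^sup>2) \<le> real N * e + 4 * l * sqrt (real N) + 2"
proof -
  have "(\<Sum>m=1..<N. 1 / sqrt (real m)) \<le> (\<Sum>m=1..N. 1 / sqrt (real m))"
    by (intro sum_mono2) auto
  also have "\<dots> \<le> 2 * sqrt (real N)" by (rule sum_inverse_sqrt_le)
  finally have sqrt_sum: "(\<Sum>m=1..<N. 1 / sqrt (real m)) \<le> 2 * sqrt (real N)" .
  have "(\<Sum>m=1..<N. 1 / (real m)\<^sup>2) \<le> (\<Sum>m=1..N. 1 / (real m)\<^sup>2)"
    by (intro sum_mono2) auto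
  also have "\<dots> \<le> 2" by (rule sum_inverse_square_le)
  finally have square_sum: "(\<Sum>m=1..<N. 1 / (real m)\<^sup>2) \<le> 2" .
  have "(\<Sum>m=1..<N. e + 2 * l / sqrt (real m) + 1 / (real m)\<^sup>2) =
        real (N - 1) * e + 2 * l * (\<Sum>m=1..<N. 1 / sqrt (real m)) + (\<Sum>m=1..<N. 1 / (real m)\<^sup>2)"
    by (simp add: sum.distrib sum_distrib_left)
  also have "\<dots> \<le> real N * e + 2 * l * (2 * sqrt (real N)) + 2"
    using sqrt_sum square_sum assms by (intro add_mono mult_left_mono mult_right_mono) auto
  finally show ?thesis by simp
qed

section \<open>Finitely supported expectations\<close>

lemma expectation_bind_pmf_finite:
  fixes f :: "'b \<Rightarrow> real"
  assumes "finite (set_pmf M)" and "\<And>x. x \<in> set_pmf M \<Longrightarrow> finite (set_pmf (N x))"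
  shows "measure_pmf.expectation (M \<bind> N) f = measure_pmf.expectation M (\<lambda>x. measure_pmf.expectation (N x) f)"
  using pmf_expectation_bind[OF assms order_refl, where h=f]
    integral_measure_pmf_real[OF assms(1), of M "\<lambda>x. measure_pmf.expectation (N x) f"]
  by (simp add: mult.commute)

lemma map_pmf_eq_bernoulli: "map_pmf (\<lambda>b. b = a) M = bernoulli_pmf (pmf M a)"
proof (rule pmf_eqI)
  fix b :: bool
  have "{x. x \<noteq> a} = UNIV - {a}" by auto
  then have "measure_pmf.prob M {x. x \<noteq> a} = 1 - pmf M a"
    using measure_pmf.prob_compl[of "{a}" M] by (simp add: measure_pmf_single)
  then show "pmf (map_pmf (\<lambda>b. b = a) M) b = pmf (bernoulli_pmf (pmf M a)) b"
    by (cases b) (auto simp: pmf_map vimage_def measure_pmf_single pmf_le_1)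
qed

lemma expectation_sum_minus_point:
  fixes u v :: "'a \<Rightarrow> real"
  assumes "finite A"
  shows "measure_pmf.expectation p (\<lambda>b. \<Sum>a\<in>A. v a - (if b = a then u a else 0)) =
         (\<Sum>a\<in>A. v a - pmf p a * u a)"
proof -
  have "measure_pmf.expectation p (\<lambda>b. if b = a then u a else 0) = pmf p a * u a" for a
    by (subst integral_measure_pmf_real[of "{a}"]) (auto split: if_splits)
  moreover have "integrable p (\<lambda>b. if b = a then u a else 0)" for a
    by (rule measure_pmf.integrable_const_bound[where B="\<bar>u a\<bar>"]) auto
  ultimately show ?thesis
    using assms by (simp add: integral_sum integral_diff)
qed

section \<open>Exponential weights\<close>

lemma exp_weights_regret_le:
  fixes g :: "nat \<Rightarrow> 'a \<Rightarrow> real" and q :: "'a \<Rightarrow> real"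
  assumes A: "finite A" "A \<noteq> {}" and eta: "0 < \<eta>"
    and q: "\<And>a. a \<in> A \<Longrightarrow> 0 \<le> q a" "sum q A = 1"
  defines "w t a \<equiv> exp (\<eta> * (\<Sum>k<t. g k a))"
  shows "(\<Sum>t<N. \<Sum>a\<in>A. q a * g t a) \<le>
         ln (card A) / \<eta> + (\<Sum>t<N. \<Sum>a\<in>A. w t a / (\<Sum>b\<in>A. w t b) * ((exp (\<eta> * g t a) - 1) / \<eta>))"
proof -
  define W where "W t = (\<Sum>b\<in>A. w t b)" for t
  have W_pos: "0 < W t" for t
    unfolding W_def w_def using A by (intro sum_pos) auto
  have step: "ln (W (Suc t)) - ln (W t) \<le> (\<Sum>a\<in>A. w t a / W t * (exp (\<eta> * g t a) - 1))" for t
  proof -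
    have "W (Suc t) / W t = (\<Sum>a\<in>A. w t a / W t * exp (\<eta> * g t a))"
      unfolding W_def w_def by (simp add: sum_divide_distrib distrib_left exp_add)
    also have "\<dots> = 1 + (\<Sum>a\<in>A. w t a / W t * (exp (\<eta> * g t a) - 1))"
      using W_pos[of t] by (simp add: right_diff_distrib sum_subtractf sum_divide_distrib[symmetric] W_def)
    finally have ratio: "W (Suc t) / W t = 1 + (\<Sum>a\<in>A. w t a / W t * (exp (\<eta> * g t a) - 1))" .
    have "ln (W (Suc t)) - ln (W t) = ln (W (Suc t) / W t)"
      using W_pos[of t] W_pos[of "Suc t"] by (simp add: ln_div)
    also have "\<dots> \<le> W (Suc t) / W t - 1"
      using W_pos[of t] W_pos[of "Suc t"] by (intro ln_le_minus_one) simp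
    finally show ?thesis unfolding ratio by simp
  qed
  have "ln (W N) - ln (real (card A)) = (\<Sum>t<N. ln (W (Suc t)) - ln (W t))"
    by (subst sum_lessThan_telescope) (simp add: W_def w_def)
  also have "\<dots> \<le> (\<Sum>t<N. \<Sum>a\<in>A. w t a / W t * (exp (\<eta> * g t a) - 1))"
    by (intro sum_mono step)
  finally have upper: "ln (W N) \<le> ln (card A) + (\<Sum>t<N. \<Sum>a\<in>A. w t a / W t * (exp (\<eta> * g t a) - 1))"
    by simp
  have single: "\<eta> * (\<Sum>t<N. g t a) \<le> ln (W N)" if "a \<in> A" for a
    using member_le_sum[of a A "w N"] that A W_pos[of N]
    by (simp add: W_def w_def ln_ge_iff)
  have "\<eta> * (\<Sum>t<N. \<Sum>a\<in>A. q a * g t a) = (\<Sum>a\<in>A. q a * (\<eta> * (\<Sum>t<N. g t a)))"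
    by (subst sum.swap) (simp add: sum_distrib_left mult_ac)
  also have "\<dots> \<le> (\<Sum>a\<in>A. q a * ln (W N))"
    by (intro sum_mono mult_left_mono single q(1))
  also have "\<dots> = ln (W N)"
    using q(2) by (simp flip: sum_distrib_right)
  finally have "\<eta> * (\<Sum>t<N. \<Sum>a\<in>A. q a * g t a) \<le>
      ln (card A) + (\<Sum>t<N. \<Sum>a\<in>A. w t a / W t * (exp (\<eta> * g t a) - 1))"
    using upper by linarith
  then have "(\<Sum>t<N. \<Sum>a\<in>A. q a * g t a) \<le>
      ln (card A) / \<eta> + (\<Sum>t<N. \<Sum>a\<in>A. w t a / W t * (exp (\<eta> * g t a) - 1)) / \<eta>"
    using eta by (simp add: pos_le_divide_eq mult.commute flip: add_divide_distrib)
  then show ?thesis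
    unfolding W_def by (simp add: sum_divide_distrib)
qed

section \<open>The game\<close>

definition count_behaviour :: "nat \<Rightarrow> hist \<Rightarrow> nat" where
  "count_behaviour a h = length (filter (\<lambda>p. snd p = a) h)"

text \<open>\<open>K \<ge> 2\<close> makes \<open>\<eta>\<close> positive; with a single action the regret vanishes (\<open>regret_single_action\<close>).\<close>

locale offline_bandit =
  fixes K n :: nat and adv :: "hist \<Rightarrow> nat \<Rightarrow> real" and piB pistar :: "nat pmf"
  assumes K_ge_2: "2 \<le> K" and n_ge_1: "1 \<le> n"
    and set_pmf_piB: "set_pmf piB \<subseteq> {..<K}" and set_pmf_pistar: "set_pmf pistar \<subseteq> {..<K}"
    and coverage: "\<And>a. pmf pistar a > 0 \<Longrightarrow> pmf piB a > 0"
    and adv_nonneg: "\<And>h a. 0 \<le> adv h a" and adv_le_1: "\<And>h a. adv h a \<le> 1"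
begin

abbreviation \<eta> where "\<eta> \<equiv> eta K n"

abbreviation hist_pmf where "hist_pmf t \<equiv> game K n adv piB t"

lemma eta_pos: "0 < \<eta>"
  unfolding eta_def using K_ge_2 n_ge_1 by simp

lemma sum_weight_pos: "0 < (\<Sum>a<K. weight K n adv h a)"
  using K_ge_2 by (intro sum_pos) (auto simp: weight_def lessThan_empty_iff)

lemma pol_nonneg: "0 \<le> pol K n adv h a"
  unfolding pol_def using sum_weight_pos[of h] by (simp add: weight_def)

lemma sum_pol: "(\<Sum>a<K. pol K n adv h a) = 1"
  unfolding pol_def using sum_weight_pos[of h] by (simp add: sum_divide_distrib[symmetric])

lemma pol_le_1: "pol K n adv h a \<le> 1"
proof (cases "a < K")
  case True
  then have "pol K n adv h a \<le> (\<Sum>a<K. pol K n adv h a)"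
    by (intro member_le_sum) (auto simp: pol_nonneg)
  then show ?thesis by (simp add: sum_pol)
qed (simp add: pol_def)

lemma pmf_embed_pol: "pmf (embed_pmf (pol K n adv h)) a = pol K n adv h a"
proof (rule pmf_embed_pmf)
  have "(\<integral>\<^sup>+x. ennreal (pol K n adv h x) \<partial>count_space UNIV) = (\<Sum>x<K. ennreal (pol K n adv h x))"
    by (rule nn_integral_count_space') (auto simp: pol_def)
  also have "\<dots> = 1"
    by (simp add: sum_ennreal pol_nonneg sum_pol)
  finally show "(\<integral>\<^sup>+x. ennreal (pol K n adv h x) \<partial>count_space UNIV) = 1" .
qed (rule pol_nonneg)

lemma set_pmf_embed_pol: "set_pmf (embed_pmf (pol K n adv h)) \<subseteq> {..<K}"
  by (auto simp: set_pmf_eq pmf_embed_pol pol_def)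

lemma set_pmf_game: "h \<in> set_pmf (hist_pmf t) \<Longrightarrow> length h = t \<and> set h \<subseteq> {..<K} \<times> {..<K}"
  by (induction t arbitrary: h) (use set_pmf_embed_pol set_pmf_piB in fastforce)+

lemma finite_set_pmf_game: "finite (set_pmf (hist_pmf t))"
proof (rule finite_subset)
  show "set_pmf (hist_pmf t) \<subseteq> {h. set h \<subseteq> {..<K} \<times> {..<K} \<and> length h = t}"
    using set_pmf_game by blast
qed (simp add: finite_lists_length_eq)

lemma integrable_game: "integrable (hist_pmf t) (f :: hist \<Rightarrow> real)"
  by (rule integrable_measure_pmf_finite[OF finite_set_pmf_game])

lemma map_pmf_take_game: "t \<le> N \<Longrightarrow> map_pmf (take t) (hist_pmf N) = hist_pmf t"
proof (induction N rule: dec_induct)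
  case base
  have "map_pmf (take t) (hist_pmf t) = map_pmf id (hist_pmf t)"
    by (intro map_pmf_cong refl) (simp add: set_pmf_game)
  then show ?case by simp
next
  case (step N)
  have "map_pmf (take t) (hist_pmf (Suc N)) = map_pmf (take t) (hist_pmf N)"
    using step(1) by (simp add: map_bind_pmf map_pmf_def[where f="take t"] bind_return_pmf
        set_pmf_game cong: bind_pmf_cong)
  then show ?case using step by simp
qed

lemma count_behaviour_snoc:
  "count_behaviour a (h @ [(A, b)]) = count_behaviour a h + (if b = a then 1 else 0)"
  by (simp add: count_behaviour_def)

lemma map_pmf_count_game: "map_pmf (count_behaviour a) (hist_pmf t) = binomial_pmf t (pmf piB a)"
proof (induction t)
  case 0 then show ?case by (simp add: count_behaviour_def binomial_pmf_0 pmf_le_1)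
next
  case (Suc t)
  have p: "pmf piB a \<in> {0..1}" by (simp add: pmf_le_1)
  have "map_pmf (count_behaviour a) (hist_pmf (Suc t)) =
      hist_pmf t \<bind> (\<lambda>h. map_pmf (\<lambda>b. b = a) piB \<bind>
        (\<lambda>b. return_pmf ((if b then 1 else 0) + count_behaviour a h)))"
    by (simp add: map_bind_pmf bind_map_pmf count_behaviour_snoc bind_return_pmf add.commute)
  also have "\<dots> = map_pmf (count_behaviour a) (hist_pmf t) \<bind>
      (\<lambda>k. bernoulli_pmf (pmf piB a) \<bind> (\<lambda>b. return_pmf ((if b then 1 else 0) + k)))"
    by (simp add: bind_map_pmf map_pmf_eq_bernoulli)
  also have "\<dots> = binomial_pmf (Suc t) (pmf piB a)"
    by (subst binomial_pmf_Suc[OF p], subst Suc, subst bind_commute_pmf) simp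
  finally show ?case .
qed

lemma expectation_game_take:
  fixes f :: "hist \<Rightarrow> real"
  assumes "t \<le> N" and "\<And>h. t \<le> length h \<Longrightarrow> f (take t h) = f h"
  shows "measure_pmf.expectation (hist_pmf N) f = measure_pmf.expectation (hist_pmf t) f"
proof -
  have "measure_pmf.expectation (hist_pmf N) f = measure_pmf.expectation (hist_pmf N) (\<lambda>h. f (take t h))"
    using assms by (intro integral_cong_AE) (auto simp: AE_measure_pmf_iff dest!: set_pmf_game)
  also have "\<dots> = measure_pmf.expectation (hist_pmf t) f"
    using assms(1) by (simp add: map_pmf_take_game flip: integral_map_pmf)
  finally show ?thesis .
qed

lemma expectation_game_Suc:
  fixes f :: "hist \<Rightarrow> real"
  shows "measure_pmf.expectation (hist_pmf (Suc t)) f =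
   measure_pmf.expectation (hist_pmf t) (\<lambda>h. measure_pmf.expectation (embed_pmf (pol K n adv h))
      (\<lambda>A. measure_pmf.expectation piB (\<lambda>b. f (h @ [(A, b)]))))"
proof -
  have fin_pol: "finite (set_pmf (embed_pmf (pol K n adv h)))" for h
    using set_pmf_embed_pol by (rule finite_subset) simp
  have fin_piB: "finite (set_pmf piB)"
    using set_pmf_piB by (rule finite_subset) simp
  show ?thesis
    by (simp add: expectation_bind_pmf_finite finite_set_pmf_game fin_pol fin_piB)
qed

text \<open>The Hoeffding radius of \<open>pihat\<close> after \<open>t - 1\<close> rounds at confidence \<open>1/(K (t-1)\<^sup>2)\<close>.\<close>

definition conf_width :: "nat \<Rightarrow> real" where
  "conf_width t = sqrt (ln (real K * (real t - 1)\<^sup>2) / (2 * real t - 2))"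

lemma conf_width_nonneg: "1 \<le> t \<Longrightarrow> 0 \<le> conf_width t"
proof (cases "t = 1")
  case False
  assume "1 \<le> t"
  with False have t: "2 \<le> t" by simp
  then have "1 * 1 \<le> real K * (real t - 1)\<^sup>2"
    using K_ge_2 by (intro mult_mono) (auto simp: one_le_power)
  then show ?thesis using t by (simp add: conf_width_def)
qed (simp add: conf_width_def)

lemma gam_eq: "2 \<le> t \<Longrightarrow> gam K n t = \<eta> / 2 + conf_width t"
  by (simp add: gam_def conf_width_def)

lemma half_eta_le_gam: "1 \<le> t \<Longrightarrow> \<eta> / 2 \<le> gam K n t"
  using eta_pos conf_width_nonneg[of t] by (cases "t = 1") (auto simp: gam_def conf_width_def)

lemma gam_pos: "1 \<le> t \<Longrightarrow> 0 < gam K n t"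
  using half_eta_le_gam[of t] eta_pos by linarith

lemma pihat_nonneg: "0 \<le> pihat h a"
  by (simp add: pihat_def)

lemma pihat_eq_count: "h \<noteq> [] \<Longrightarrow> pihat h a = real (count_behaviour a h) / real (length h)"
  by (simp add: pihat_def count_behaviour_def)

lemma rtilde_take: "1 \<le> k \<Longrightarrow> k \<le> j \<Longrightarrow> rtilde K n adv (take j h) k a = rtilde K n adv h k a"
  by (simp add: rtilde_def Let_def min_absorb1)

lemma rtilde_snoc: "length h = m \<Longrightarrow> rtilde K n adv (h @ [(A, b)]) (Suc m) a =
   (if b = a then adv h a / (pihat h a + gam K n (Suc m)) else 0)"
  by (simp add: rtilde_def Let_def nth_append)

lemma pol_take_eq_exp_weights:
  assumes "t \<le> length h" "a < K"
  shows "pol K n adv (take t h) a =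
    exp (\<eta> * (\<Sum>k<t. rtilde K n adv h (Suc k) a)) / (\<Sum>b<K. exp (\<eta> * (\<Sum>k<t. rtilde K n adv h (Suc k) b)))"
proof -
  have "weight K n adv (take t h) b = exp (\<eta> * (\<Sum>k<t. rtilde K n adv h (Suc k) b))" for b
    using assms(1) by (simp add: weight_def sum.atLeast1_atMost_eq rtilde_take min_absorb1)
  then show ?thesis using assms(2) by (simp add: pol_def)
qed

definition comparator_error :: "nat \<Rightarrow> hist \<Rightarrow> real" where
  "comparator_error t h = (\<Sum>a<K. pmf pistar a * (adv (take (t - 1) h) a - rtilde K n adv h t a))"

definition learner_error :: "nat \<Rightarrow> hist \<Rightarrow> real" where
  "learner_error t h = (\<Sum>a<K. pol K n adv (take (t - 1) h) a *
     ((exp (\<eta> * rtilde K n adv h t a) - 1) / \<eta> - adv (take (t - 1) h) a))"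

lemma regret_le_errors:
  assumes "length h = n"
  shows "regret K n adv pistar h \<le>
    ln (real K) / \<eta> + (\<Sum>t=1..n. comparator_error t h) + (\<Sum>t=1..n. learner_error t h)"
proof -
  have "(\<Sum>t=1..n. \<Sum>a<K. pmf pistar a * rtilde K n adv h t a) \<le>
    ln (real K) / \<eta> + (\<Sum>t=1..n. \<Sum>a<K. pol K n adv (take (t - 1) h) a * ((exp (\<eta> * rtilde K n adv h t a) - 1) / \<eta>))"
    using exp_weights_regret_le[of "{..<K}" \<eta> "pmf pistar" "\<lambda>t. rtilde K n adv h (Suc t)" n]
      K_ge_2 eta_pos sum_pmf_eq_1[OF _ set_pmf_pistar] assms
    by (simp add: sum.atLeast1_atMost_eq pol_take_eq_exp_weights lessThan_empty_iff)
  moreover have "regret K n adv pistar h = (\<Sum>t=1..n. comparator_error t h) +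
     ((\<Sum>t=1..n. \<Sum>a<K. pmf pistar a * rtilde K n adv h t a) -
      (\<Sum>t=1..n. \<Sum>a<K. pol K n adv (take (t - 1) h) a * ((exp (\<eta> * rtilde K n adv h t a) - 1) / \<eta>)))
     + (\<Sum>t=1..n. learner_error t h)"
    unfolding regret_def comparator_error_def learner_error_def
    by (simp add: sum.distrib[symmetric] sum_subtractf[symmetric] algebra_simps)
  ultimately show ?thesis by linarith
qed

text \<open>The conditional expectations of the two errors of round \<open>m + 1\<close> given the history \<open>h\<close> of
  the first \<open>m\<close> rounds.\<close>

definition comparator_bias :: "nat \<Rightarrow> hist \<Rightarrow> real" where
  "comparator_bias m h =
     (\<Sum>a<K. pmf pistar a * (adv h a * (1 - pmf piB a / (pihat h a + gam K n (Suc m)))))"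

definition learner_bias :: "nat \<Rightarrow> hist \<Rightarrow> real" where
  "learner_bias m h = (\<Sum>a<K. pol K n adv h a *
     (pmf piB a * (exp (\<eta> * adv h a / (pihat h a + gam K n (Suc m))) - 1) / \<eta> - adv h a))"

lemma expectation_piB_comparator_error:
  assumes "length h = m"
  shows "measure_pmf.expectation piB (\<lambda>b. comparator_error (Suc m) (h @ [(A, b)])) = comparator_bias m h"
proof -
  have "comparator_error (Suc m) (h @ [(A, b)]) = (\<Sum>a<K. pmf pistar a * adv h a -
      (if b = a then pmf pistar a * adv h a / (pihat h a + gam K n (Suc m)) else 0))" for b
    unfolding comparator_error_def using assms by (intro sum.cong) (auto simp: rtilde_snoc algebra_simps)
  then show ?thesis
    by (simp add: expectation_sum_minus_point comparator_bias_def algebra_simps)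
qed

lemma expectation_piB_learner_error:
  assumes "length h = m"
  shows "measure_pmf.expectation piB (\<lambda>b. learner_error (Suc m) (h @ [(A, b)])) = learner_bias m h"
proof -
  have "learner_error (Suc m) (h @ [(A, b)]) = (\<Sum>a<K. - pol K n adv h a * adv h a -
      (if b = a then - (pol K n adv h a * ((exp (\<eta> * adv h a / (pihat h a + gam K n (Suc m))) - 1) / \<eta>)) else 0))" for b
    unfolding learner_error_def using assms by (intro sum.cong) (auto simp: rtilde_snoc algebra_simps)
  then show ?thesis
    by (simp add: expectation_sum_minus_point learner_bias_def algebra_simps)
qed

lemma expectation_game_last_round:
  fixes f F :: "hist \<Rightarrow> real"
  assumes "Suc m \<le> N"
    and "\<And>h. Suc m \<le> length h \<Longrightarrow> f (take (Suc m) h) = f h"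
    and "\<And>h A. length h = m \<Longrightarrow> measure_pmf.expectation piB (\<lambda>b. f (h @ [(A, b)])) = F h"
  shows "measure_pmf.expectation (hist_pmf N) f = measure_pmf.expectation (hist_pmf m) F"
proof -
  have "measure_pmf.expectation (hist_pmf N) f = measure_pmf.expectation (hist_pmf (Suc m)) f"
    using assms(1,2) by (rule expectation_game_take)
  also have "\<dots> = measure_pmf.expectation (hist_pmf m) F"
    unfolding expectation_game_Suc
    by (intro integral_cong_AE) (auto simp: AE_measure_pmf_iff assms(3) set_pmf_game)
  finally show ?thesis .
qed

lemma expectation_comparator_error:
  "m < n \<Longrightarrow> measure_pmf.expectation (hist_pmf n) (comparator_error (Suc m)) =
     measure_pmf.expectation (hist_pmf m) (comparator_bias m)"
  using expectation_piB_comparator_error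
  by (intro expectation_game_last_round) (auto simp: comparator_error_def rtilde_take)

lemma expectation_learner_error:
  "m < n \<Longrightarrow> measure_pmf.expectation (hist_pmf n) (learner_error (Suc m)) =
     measure_pmf.expectation (hist_pmf m) (learner_bias m)"
  using expectation_piB_learner_error
  by (intro expectation_game_last_round) (auto simp: learner_error_def rtilde_take)

lemma pmf_pistar_mult_le_ratio:
  assumes "pmf piB a > 0 \<Longrightarrow> x \<le> c / pmf piB a"
  shows "pmf pistar a * x \<le> pmf pistar a / pmf piB a * c"
proof (cases "pmf pistar a = 0")
  case False
  then have "pmf piB a > 0" using coverage[of a] pmf_nonneg[of pistar a] by linarith
  then show ?thesis using assms mult_left_mono[of x "c / pmf piB a" "pmf pistar a"] by simp
qed simp

lemma comparator_bias_first_le: "comparator_bias 0 h \<le> conc K pistar piB"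
  unfolding comparator_bias_def conc_def
proof (intro sum_mono)
  fix a
  let ?D = "pihat h a + gam K n (Suc 0)"
  have "pmf pistar a * (adv h a * (1 - pmf piB a / ?D)) \<le> pmf pistar a / pmf piB a * 1"
  proof (rule pmf_pistar_mult_le_ratio)
    assume p: "0 < pmf piB a"
    have "0 < ?D" using gam_pos[of 1] pihat_nonneg[of h a] by simp
    then have "adv h a * (1 - pmf piB a / ?D) \<le> 1"
      using p adv_nonneg[of h a] adv_le_1[of h a]
      by (smt (verit) divide_pos_pos mult_left_le mult_nonneg_nonpos)
    also have "1 \<le> 1 / pmf piB a" using p pmf_le_1[of piB a] by simp
    finally show "adv h a * (1 - pmf piB a / ?D) \<le> 1 / pmf piB a" .
  qed
  then show "pmf pistar a * (adv h a * (1 - pmf piB a / ?D)) \<le> pmf pistar a / pmf piB a"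
    by simp
qed

lemma comparator_bias_le:
  "comparator_bias m h \<le> (\<Sum>a<K. pmf pistar a / pmf piB a *
     (gam K n (Suc m) + conf_width (Suc m) + indicator {h. pmf piB a + conf_width (Suc m) \<le> pihat h a} h))"
  unfolding comparator_bias_def
proof (intro sum_mono pmf_pistar_mult_le_ratio)
  fix a assume p: "pmf piB a > 0"
  have "0 < gam K n (Suc m)" and "0 \<le> conf_width (Suc m)"
    by (simp_all add: gam_pos conf_width_nonneg)
  from importance_bias_le[OF adv_nonneg[of h a] adv_le_1[of h a] p pmf_le_1 pihat_nonneg[of h a] this]
  show "adv h a * (1 - pmf piB a / (pihat h a + gam K n (Suc m))) \<le>
    (gam K n (Suc m) + conf_width (Suc m) + indicator {h. pmf piB a + conf_width (Suc m) \<le> pihat h a} h) / pmf piB a"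
    by (simp add: indicator_def split: if_splits)
qed

lemma learner_bias_first_nonpos: "learner_bias 0 h \<le> 0"
  unfolding learner_bias_def
proof (intro sum_nonpos mult_nonneg_nonpos pol_nonneg)
  fix a
  have "pmf piB a + \<eta> / 2 \<le> pihat h a + gam K n (Suc 0)"
    using pihat_nonneg[of h a] pmf_le_1[of piB a] by (simp add: gam_def)
  then show "pmf piB a * (exp (\<eta> * adv h a / (pihat h a + gam K n (Suc 0))) - 1) / \<eta> - adv h a \<le> 0"
    using exp_importance_estimate_le[OF eta_pos _ pmf_nonneg adv_nonneg adv_le_1] by simp
qed

lemma learner_bias_le:
  assumes "1 \<le> m"
  shows "learner_bias m h \<le>
    (exp 2 - 1) / \<eta> * (\<Sum>a<K. indicator {h. pihat h a \<le> pmf piB a - conf_width (Suc m)} h)"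
  unfolding learner_bias_def sum_distrib_left
proof (intro sum_mono)
  fix a
  let ?D = "pihat h a + gam K n (Suc m)"
  let ?I = "indicator {h. pihat h a \<le> pmf piB a - conf_width (Suc m)} h :: real"
  have "pmf piB a * (exp (\<eta> * adv h a / ?D) - 1) / \<eta> - adv h a \<le> (exp 2 - 1) / \<eta> * ?I"
  proof (cases "pihat h a \<le> pmf piB a - conf_width (Suc m)")
    case True
    have "\<eta> / 2 \<le> ?D" using half_eta_le_gam[of "Suc m"] pihat_nonneg[of h a] by simp
    from exp_importance_estimate_le_exp2[OF eta_pos this pmf_nonneg pmf_le_1 adv_nonneg adv_le_1]
    show ?thesis using True by simp
  next
    case False
    then have "pmf piB a + \<eta> / 2 \<le> ?D" using gam_eq[of "Suc m"] assms by simp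
    from exp_importance_estimate_le[OF eta_pos this pmf_nonneg adv_nonneg adv_le_1]
    show ?thesis using False by simp
  qed
  moreover have "0 \<le> (exp 2 - 1) / \<eta> * ?I" using eta_pos by simp
  ultimately show "pol K n adv h a * (pmf piB a * (exp (\<eta> * adv h a / ?D) - 1) / \<eta> - adv h a) \<le>
    (exp 2 - 1) / \<eta> * ?I"
    using pol_nonneg[of h a] pol_le_1[of h a]
    by (smt (verit) mult_left_le_one_le mult_nonneg_nonpos)
qed

section \<open>Concentration of the behaviour estimate\<close>

lemma exp_conf_width_eq:
  assumes "1 \<le> m"
  shows "exp (- (2 * real m * (conf_width (Suc m))\<^sup>2)) = 1 / (real K * (real m)\<^sup>2)"
proof -
  have pos: "0 < real K * (real m)\<^sup>2" using K_ge_2 assms by simp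
  have "1 * 1 \<le> real K * (real m)\<^sup>2"
    using K_ge_2 assms by (intro mult_mono) (auto simp: one_le_power)
  then have "(conf_width (Suc m))\<^sup>2 = ln (real K * (real m)\<^sup>2) / (2 * real m)"
    using assms by (simp add: conf_width_def algebra_simps)
  then have "2 * real m * (conf_width (Suc m))\<^sup>2 = ln (real K * (real m)\<^sup>2)"
    using assms by simp
  then show ?thesis using pos by (simp add: exp_minus inverse_eq_divide)
qed

lemma prob_pihat_eq_binomial:
  assumes "1 \<le> m"
  shows "measure_pmf.prob (hist_pmf m) {h. P (pihat h a)} =
         measure_pmf.prob (binomial_pmf m (pmf piB a)) {k. P (real k / real m)}"
proof -
  have "pihat h a = real (count_behaviour a h) / real m" if "h \<in> set_pmf (hist_pmf m)" for h
    using set_pmf_game[OF that] assms by (subst pihat_eq_count) auto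
  then have "{h. P (pihat h a)} \<inter> set_pmf (hist_pmf m) =
        count_behaviour a -` {k. P (real k / real m)} \<inter> set_pmf (hist_pmf m)"
    by auto
  then have "measure_pmf.prob (hist_pmf m) {h. P (pihat h a)} =
             measure_pmf.prob (hist_pmf m) (count_behaviour a -` {k. P (real k / real m)})"
    by (metis measure_Int_set_pmf)
  then show ?thesis by (simp flip: map_pmf_count_game)
qed

lemma prob_pihat_ge:
  assumes "1 \<le> m"
  shows "measure_pmf.prob (hist_pmf m) {h. pmf piB a + conf_width (Suc m) \<le> pihat h a} \<le> 1 / (real K * (real m)\<^sup>2)"
proof -
  interpret binomial_distribution m "pmf piB a"
    by unfold_locales (simp add: pmf_le_1)
  show ?thesis
    using prob_ge'[of "conf_width (Suc m)"] assms conf_width_nonneg[of "Suc m"]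
      prob_pihat_eq_binomial[where P="\<lambda>x. pmf piB a + conf_width (Suc m) \<le> x"]
    by (simp add: exp_conf_width_eq)
qed

lemma prob_pihat_le:
  assumes "1 \<le> m"
  shows "measure_pmf.prob (hist_pmf m) {h. pihat h a \<le> pmf piB a - conf_width (Suc m)} \<le> 1 / (real K * (real m)\<^sup>2)"
proof -
  interpret binomial_distribution m "pmf piB a"
    by unfold_locales (simp add: pmf_le_1)
  show ?thesis
    using prob_le'[of "conf_width (Suc m)"] assms conf_width_nonneg[of "Suc m"]
      prob_pihat_eq_binomial[where P="\<lambda>x. x \<le> pmf piB a - conf_width (Suc m)"]
    by (simp add: exp_conf_width_eq)
qed

lemma expectation_comparator_error_first: "measure_pmf.expectation (hist_pmf n) (comparator_error 1) \<le> conc K pistar piB"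
proof -
  have "measure_pmf.expectation (hist_pmf 0) (comparator_bias 0) \<le>
        measure_pmf.expectation (hist_pmf 0) (\<lambda>_. conc K pistar piB)"
    by (intro integral_mono integrable_game comparator_bias_first_le)
  then show ?thesis using expectation_comparator_error[of 0] n_ge_1 by simp
qed

lemma expectation_comparator_error_le:
  assumes "1 \<le> m" "m < n"
  shows "measure_pmf.expectation (hist_pmf n) (comparator_error (Suc m)) \<le>
    conc K pistar piB * (gam K n (Suc m) + conf_width (Suc m) + 1 / (real K * (real m)\<^sup>2))"
proof -
  define c where "c a = pmf pistar a / pmf piB a" for a
  define g where "g = gam K n (Suc m) + conf_width (Suc m)"
  define E where "E a = {h. pmf piB a + conf_width (Suc m) \<le> pihat h a}" for a
  have "measure_pmf.expectation (hist_pmf m) (comparator_bias m) \<le>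
        measure_pmf.expectation (hist_pmf m) (\<lambda>h. \<Sum>a<K. c a * g + c a * indicator (E a) h)"
    using comparator_bias_le
    by (intro integral_mono integrable_game) (simp add: c_def g_def E_def distrib_left add.assoc)
  also have "\<dots> = (\<Sum>a<K. c a * g + c a * measure_pmf.prob (hist_pmf m) (E a))"
    by (simp add: integrable_game)
  also have "\<dots> \<le> (\<Sum>a<K. c a * g + c a * (1 / (real K * (real m)\<^sup>2)))"
    unfolding E_def c_def using assms(1) by (intro sum_mono add_left_mono mult_left_mono prob_pihat_ge) simp_all
  also have "\<dots> = conc K pistar piB * (g + 1 / (real K * (real m)\<^sup>2))"
    unfolding conc_def c_def sum_distrib_right by (simp add: distrib_left)
  finally show ?thesis
    using expectation_comparator_error[OF assms(2)] by (simp add: g_def)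
qed

lemma expectation_learner_error_first: "measure_pmf.expectation (hist_pmf n) (learner_error 1) \<le> 0"
proof -
  have "measure_pmf.expectation (hist_pmf 0) (learner_bias 0) \<le> measure_pmf.expectation (hist_pmf 0) (\<lambda>_. 0)"
    by (intro integral_mono integrable_game learner_bias_first_nonpos)
  then show ?thesis using expectation_learner_error[of 0] n_ge_1 by simp
qed

lemma expectation_learner_error_le:
  assumes "1 \<le> m" "m < n"
  shows "measure_pmf.expectation (hist_pmf n) (learner_error (Suc m)) \<le> (exp 2 - 1) / \<eta> * (1 / (real m)\<^sup>2)"
proof -
  define E where "E a = {h. pihat h a \<le> pmf piB a - conf_width (Suc m)}" for a
  have e: "0 \<le> (exp 2 - 1) / \<eta>" using eta_pos by simp
  have "measure_pmf.expectation (hist_pmf m) (learner_bias m) \<le>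
        measure_pmf.expectation (hist_pmf m) (\<lambda>h. (exp 2 - 1) / \<eta> * (\<Sum>a<K. indicator (E a) h))"
    using learner_bias_le[OF assms(1)] by (intro integral_mono integrable_game) (simp add: E_def)
  also have "\<dots> = (exp 2 - 1) / \<eta> * (\<Sum>a<K. measure_pmf.prob (hist_pmf m) (E a))"
    by (simp add: integrable_game)
  also have "\<dots> \<le> (exp 2 - 1) / \<eta> * (\<Sum>a<K. 1 / (real K * (real m)\<^sup>2))"
    unfolding E_def using assms(1) e by (intro sum_mono mult_left_mono prob_pihat_le) simp_all
  also have "\<dots> = (exp 2 - 1) / \<eta> * (1 / (real m)\<^sup>2)"
    using K_ge_2 by simp
  finally show ?thesis
    using expectation_learner_error[OF assms(2)] by simp
qed

section \<open>Summing over the rounds\<close>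

abbreviation rate where "rate \<equiv> sqrt (real n * ln (real K * real n))"

lemma conf_width_le:
  assumes "1 \<le> m" "m \<le> n"
  shows "conf_width (Suc m) \<le> sqrt (ln (real K * real n)) / sqrt (real m)"
proof -
  have "real K * (real m)\<^sup>2 \<le> (real K * real K) * (real n)\<^sup>2"
    using assms K_ge_2 by (intro mult_mono power_mono) auto
  also have "\<dots> = (real K * real n)\<^sup>2"
    by (simp add: power2_eq_square)
  finally have "ln (real K * (real m)\<^sup>2) \<le> ln ((real K * real n)\<^sup>2)"
    using K_ge_2 assms by (intro ln_mono) auto
  also have "\<dots> = 2 * ln (real K * real n)"
    using K_ge_2 assms by (simp add: ln_realpow)
  finally have "ln (real K * (real m)\<^sup>2) / (2 * real m) \<le> 2 * ln (real K * real n) / (2 * real m)"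
    using assms by (intro divide_right_mono) auto
  then have "ln (real K * (real m)\<^sup>2) / (2 * real m) \<le> ln (real K * real n) / real m"
    by simp
  then show ?thesis
    by (simp add: conf_width_def real_sqrt_divide[symmetric])
qed

lemma sum_expectation_comparator_error_le:
  "(\<Sum>t=1..n. measure_pmf.expectation (hist_pmf n) (comparator_error t)) \<le>
   conc K pistar piB * (3 + real n * \<eta> / 2 + 4 * rate)"
proof -
  define C where "C = conc K pistar piB"
  define l where "l = sqrt (ln (real K * real n))"
  have C: "0 \<le> C" unfolding C_def conc_def by (intro sum_nonneg) simp
  have "1 * 1 \<le> real K * real n" using K_ge_2 n_ge_1 by (intro mult_mono) auto
  then have l: "0 \<le> l" unfolding l_def by simp
  have round: "measure_pmf.expectation (hist_pmf n) (comparator_error (Suc m)) \<le>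
      C * (\<eta> / 2 + 2 * l / sqrt (real m) + 1 / (real m)\<^sup>2)" if m: "m \<in> {1..<n}" for m
  proof -
    have "1 / (real K * (real m)\<^sup>2) \<le> 1 / (real m)\<^sup>2"
      using K_ge_2 m by (intro divide_left_mono) auto
    then have "gam K n (Suc m) + conf_width (Suc m) + 1 / (real K * (real m)\<^sup>2) \<le>
        \<eta> / 2 + 2 * l / sqrt (real m) + 1 / (real m)\<^sup>2"
      using conf_width_le[of m] gam_eq[of "Suc m"] m by (simp add: l_def)
    then show ?thesis
      using m C unfolding C_def
      by (intro order_trans[OF expectation_comparator_error_le[of m]] mult_left_mono) auto
  qed
  have "(\<Sum>t=1..n. measure_pmf.expectation (hist_pmf n) (comparator_error t)) \<le>
      C + C * (\<Sum>m=1..<n. \<eta> / 2 + 2 * l / sqrt (real m) + 1 / (real m)\<^sup>2)"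
    unfolding sum_atLeast1_atMost_split[OF n_ge_1] sum_distrib_left
    using expectation_comparator_error_first round unfolding C_def
    by (intro add_mono sum_mono) auto
  also have "\<dots> \<le> C + C * (real n * (\<eta> / 2) + 4 * l * sqrt (real n) + 2)"
    using sum_inverse_sqrt_square_terms_le[of "\<eta> / 2" l n] eta_pos l C by (intro add_left_mono mult_left_mono) auto
  also have "\<dots> = C * (3 + real n * \<eta> / 2 + 4 * rate)"
    by (simp add: l_def real_sqrt_mult algebra_simps)
  finally show ?thesis unfolding C_def .
qed

lemma sum_expectation_learner_error_le:
  "(\<Sum>t=1..n. measure_pmf.expectation (hist_pmf n) (learner_error t)) \<le> 2 * ((exp 2 - 1) / \<eta>)"
proof -
  have e: "0 \<le> (exp 2 - 1) / \<eta>" using eta_pos by simp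
  have "(\<Sum>t=1..n. measure_pmf.expectation (hist_pmf n) (learner_error t)) \<le>
      0 + (\<Sum>m=1..<n. (exp 2 - 1) / \<eta> * (1 / (real m)\<^sup>2))"
    unfolding sum_atLeast1_atMost_split[OF n_ge_1]
    using expectation_learner_error_first expectation_learner_error_le
    by (intro add_mono sum_mono) auto
  also have "\<dots> = (exp 2 - 1) / \<eta> * (\<Sum>m=1..<n. 1 / (real m)\<^sup>2)"
    by (simp add: sum_distrib_left)
  also have "\<dots> \<le> (exp 2 - 1) / \<eta> * (\<Sum>m=1..n. 1 / (real m)\<^sup>2)"
    using e by (intro mult_left_mono sum_mono2) auto
  also have "\<dots> \<le> (exp 2 - 1) / \<eta> * 2"
    using e by (intro mult_left_mono sum_inverse_square_le)
  also have "\<dots> = 2 * ((exp 2 - 1) / \<eta>)"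
    by simp
  finally show ?thesis .
qed

lemma
  shows ln_K_div_eta_le_rate: "ln (real K) / \<eta> \<le> rate"
    and n_mult_eta_le_rate: "real n * \<eta> \<le> rate"
    and inverse_eta_le_rate: "1 / \<eta> \<le> 3 / 2 * rate"
    and three_le_four_rate: "3 \<le> 4 * rate"
proof -
  define l where "l = ln (real K)"
  have "ln 2 \<le> l" unfolding l_def using K_ge_2 by simp
  then have l_ge: "2 / 3 \<le> l" using ln2_ge_two_thirds by linarith
  have l_le: "l \<le> ln (real K * real n)"
    unfolding l_def using K_ge_2 n_ge_1 by simp
  have n: "1 \<le> real n" using n_ge_1 by simp
  have eta_sq: "\<eta>\<^sup>2 = l / real n"
    unfolding eta_def l_def using l_ge l_def n by simp
  have rate_sq: "rate\<^sup>2 = real n * ln (real K * real n)"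
    using l_ge l_le n by simp
  have rate_nonneg: "0 \<le> rate" using l_ge l_le n by simp
  have "(l / \<eta>)\<^sup>2 = l\<^sup>2 / (l / real n)"
    by (simp add: power_divide eta_sq)
  also have "\<dots> = real n * l"
    using l_ge n by (simp add: power2_eq_square field_simps)
  also have "\<dots> \<le> rate\<^sup>2" unfolding rate_sq using l_le n by simp
  finally show "ln (real K) / \<eta> \<le> rate"
    unfolding l_def using rate_nonneg by (rule power2_le_imp_le)
  have "(real n * \<eta>)\<^sup>2 = (real n)\<^sup>2 * (l / real n)"
    by (simp add: power_mult_distrib eta_sq)
  also have "\<dots> = real n * l"
    using n by (simp add: power2_eq_square)
  also have "\<dots> \<le> rate\<^sup>2" unfolding rate_sq using l_le n by simp
  finally show "real n * \<eta> \<le> rate"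
    using rate_nonneg by (rule power2_le_imp_le)
  have "(1 / \<eta>)\<^sup>2 = real n / l"
    using eta_sq by (simp add: power_divide)
  also have "\<dots> \<le> real n * (9 / 4 * ln (real K * real n))"
  proof -
    have "2 / 3 * (2 / 3) \<le> l * ln (real K * real n)"
      using l_ge l_le by (intro mult_mono) auto
    then show ?thesis using l_ge n by (simp add: field_simps)
  qed
  also have "\<dots> = (3 / 2 * rate)\<^sup>2"
    unfolding power_mult_distrib rate_sq by (simp add: power2_eq_square)
  finally have "(1 / \<eta>)\<^sup>2 \<le> (3 / 2 * rate)\<^sup>2" .
  then show "1 / \<eta> \<le> 3 / 2 * rate"
    by (rule power2_le_imp_le) (use rate_nonneg in simp)
  have "1 * (2 / 3) \<le> real n * ln (real K * real n)"
    using l_ge l_le n by (intro mult_mono) auto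
  then have "(3 / 4)\<^sup>2 \<le> rate\<^sup>2"
    unfolding rate_sq by (simp add: power2_eq_square)
  then have "3 / 4 \<le> rate"
    using rate_nonneg by (rule power2_le_imp_le)
  then show "3 \<le> 4 * rate" by simp
qed

lemma conc_ge_1: "1 \<le> conc K pistar piB"
proof -
  have "1 = (\<Sum>a<K. pmf pistar a)" using sum_pmf_eq_1[OF _ set_pmf_pistar] by simp
  also have "\<dots> \<le> (\<Sum>a<K. pmf pistar a / pmf piB a)"
  proof (intro sum_mono)
    fix a
    show "pmf pistar a \<le> pmf pistar a / pmf piB a"
    proof (cases "pmf pistar a = 0")
      case False
      then have "pmf piB a > 0" using coverage[of a] pmf_nonneg[of pistar a] by linarith
      then show ?thesis using pmf_le_1[of piB a] pmf_nonneg[of pistar a]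
        by (simp add: le_divide_eq mult_left_le)
    qed simp
  qed
  finally show ?thesis by (simp add: conc_def)
qed

lemma expected_regret_le_errors:
  "expected_regret K n adv piB pistar \<le> ln (real K) / \<eta> +
     (\<Sum>t=1..n. measure_pmf.expectation (hist_pmf n) (comparator_error t)) +
     (\<Sum>t=1..n. measure_pmf.expectation (hist_pmf n) (learner_error t))"
proof -
  have "expected_regret K n adv piB pistar \<le> measure_pmf.expectation (hist_pmf n)
      (\<lambda>h. ln (real K) / \<eta> + (\<Sum>t=1..n. comparator_error t h) + (\<Sum>t=1..n. learner_error t h))"
    unfolding expected_regret_def
    using set_pmf_game regret_le_errors
    by (intro integral_mono_AE integrable_game) (auto simp: AE_measure_pmf_iff)
  also have "\<dots> = ln (real K) / \<eta> +
     (\<Sum>t=1..n. measure_pmf.expectation (hist_pmf n) (comparator_error t)) +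
     (\<Sum>t=1..n. measure_pmf.expectation (hist_pmf n) (learner_error t))"
    by (simp add: integrable_game)
  finally show ?thesis .
qed

lemma expected_regret_le: "expected_regret K n adv piB pistar \<le> 40 * conc K pistar piB * rate"
proof -
  define C where "C = conc K pistar piB"
  have C: "1 \<le> C" unfolding C_def by (rule conc_ge_1)
  have "exp (2 :: real) = exp 1 * exp 1" by (simp flip: exp_add)
  also have "\<dots> \<le> 2.72 * 2.72" using e_less_272 by (intro mult_mono) auto
  finally have exp2: "exp 2 - 1 \<le> (7 :: real)" by simp
  have "(exp 2 - 1) / \<eta> = (exp 2 - 1) * (1 / \<eta>)" by simp
  also have "\<dots> \<le> 7 * (3 / 2 * rate)"
    using exp2 inverse_eta_le_rate eta_pos by (intro mult_mono) auto
  finally have learner: "(exp 2 - 1) / \<eta> \<le> 7 * (3 / 2 * rate)" .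
  have comparator: "C * (3 + real n * \<eta> / 2 + 4 * rate) \<le> C * (17 / 2 * rate)"
    using C n_mult_eta_le_rate three_le_four_rate by (intro mult_left_mono) auto
  have rate: "0 \<le> rate" using three_le_four_rate by linarith
  have "ln (real K) / \<eta> + C * (3 + real n * \<eta> / 2 + 4 * rate) + 2 * ((exp 2 - 1) / \<eta>) \<le>
        rate + C * (17 / 2 * rate) + 2 * (7 * (3 / 2 * rate))"
    using ln_K_div_eta_le_rate comparator learner by linarith
  also have "\<dots> = 22 * rate + 17 / 2 * (C * rate)"
    by (simp add: algebra_simps)
  also have "\<dots> \<le> 40 * C * rate"
    using mult_right_mono[OF C rate] mult_nonneg_nonneg[OF _ rate, of C] C by simp
  finally have "ln (real K) / \<eta> + C * (3 + real n * \<eta> / 2 + 4 * rate) + 2 * ((exp 2 - 1) / \<eta>) \<le>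
      40 * C * rate" .
  then show ?thesis
    using expected_regret_le_errors sum_expectation_comparator_error_le sum_expectation_learner_error_le
    unfolding C_def by linarith
qed

end

lemma regret_single_action:
  assumes "set_pmf pistar \<subseteq> {..<1}"
  shows "regret 1 n adv pistar h = 0"
proof -
  have "pmf pistar 0 = 1" using sum_pmf_eq_1[of "{..<1}" pistar] assms by simp
  then show ?thesis by (simp add: regret_def pol_def weight_def)
qed

theorem theorem2:
  shows "\<exists>c>0. \<forall>K n adv piB pistar.
     K \<ge> 1 \<longrightarrow> n \<ge> 1 \<longrightarrow>
     set_pmf piB \<subseteq> {..<K} \<longrightarrow> set_pmf pistar \<subseteq> {..<K} \<longrightarrow>
     (\<forall>a. pmf pistar a > 0 \<longrightarrow> pmf piB a > 0) \<longrightarrow>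
     (\<forall>h a. 0 \<le> adv h a \<and> adv h a \<le> 1) \<longrightarrow>
     expected_regret K n adv piB pistar \<le> c * conc K pistar piB * sqrt (real n * ln (real K * real n))"
proof (intro exI[of _ 40] conjI allI impI)
  fix K n :: nat and adv :: "hist \<Rightarrow> nat \<Rightarrow> real" and piB pistar :: "nat pmf"
  assume K: "K \<ge> 1" and n: "n \<ge> 1" and piB: "set_pmf piB \<subseteq> {..<K}"
    and pistar: "set_pmf pistar \<subseteq> {..<K}" and coverage: "\<forall>a. pmf pistar a > 0 \<longrightarrow> pmf piB a > 0"
    and adv: "\<forall>h a. 0 \<le> adv h a \<and> adv h a \<le> 1"
  show "expected_regret K n adv piB pistar \<le> 40 * conc K pistar piB * sqrt (real n * ln (real K * real n))"
  proof (cases "K = 1")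
    case True
    then have "regret K n adv pistar = (\<lambda>_. 0)"
      using regret_single_action pistar by auto
    moreover have "0 \<le> conc K pistar piB" unfolding conc_def by (intro sum_nonneg) simp
    ultimately show ?thesis
      using True n by (simp add: expected_regret_def)
  next
    case False
    interpret offline_bandit K n adv piB pistar
      using K False n piB pistar coverage adv by unfold_locales auto
    show ?thesis by (rule expected_regret_le)
  qed
qed simp

end
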